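(* An element $\bar b\in\mathcal B$ satisfies $W\bar b+\tilde P\bar b\ni0$ in $C(\mathcal X)$ if and only if $B^{-1}(\bar b)$ is supported on $\arg\min_{\mathcal X}V$.
   Context: $(\mathcal X,\mathsf d)$ compact metric space; $\varepsilon>0$; $c\in C(\mathcal X\times\mathcal X)$ symmetric, nonnegative, with $k_c:=\exp(-c/\varepsilon)$ a positive definite universal kernel, RKHS $\mathcal H_c$, Riesz map $H_c$ ($H_c[\sigma](y)=\int k_c(x,y)d\sigma(x)$ on measures; $H_c^{-1}$ on $H_c[\mathcal M(\mathcal X)]$ returns the measure); $V\in C(\mathcal X)$. $\mathcal B:=H_c[\mathcal M_+(\mathcal X)]\cap\{\|b\|_{\mathcal H_c}=1\}$; $B^{-1}(b):=b\,H_c^{-1}[b]$ (a probability measure, inverse of the embedding $B(\mu)=\exp(-f_\mu/\varepsilon)$, with $b>0$ on $\mathcal X$). For $b\in H_c[\mathcal M(\mathcal X)]$: $Vb$ pointwise product, $V^*b:=H_c[VH_c^{-1}[b]]$, $W:=\frac2\varepsilon(V-V^* )$; for $b\in H_c[\mathcal M_+(\mathcal X)]$: $\tilde Pb:=\{p\in C(\mathcal X):p\le0,\ p=0\text{ on }\operatorname{supp}H_c^{-1}[b]\}$. *)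

theory Defs
  imports "HOL-Probability.Probability"
begin

text \<open>The compact metric space X is the universe of a metric_space type 'a.
  Measures on X are finite Borel measures (positive), i.e. elements of M_+(X).\<close>

definition kc :: "real \<Rightarrow> ('a \<Rightarrow> 'a \<Rightarrow> real) \<Rightarrow> 'a \<Rightarrow> 'a \<Rightarrow> real" where
  "kc eps c = (\<lambda>x y. exp (- c x y / eps))"

definition pd_kernel :: "('a \<Rightarrow> 'a \<Rightarrow> real) \<Rightarrow> bool" where
  "pd_kernel k \<longleftrightarrow> (\<forall>x y. k x y = k y x) \<and>
     (\<forall>(n::nat) (xs::nat \<Rightarrow> 'a) (a::nat \<Rightarrow> real).
        (\<Sum>i<n. \<Sum>j<n. a i * a j * k (xs i) (xs j)) \<ge> 0)"

text \<open>Universal kernel: the RKHS is dense in C(X) w.r.t. the sup norm; equivalently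
  the span of the kernel sections k(x,.) is uniformly dense in C(X).\<close>
definition universal_kernel :: "('a::topological_space \<Rightarrow> 'a \<Rightarrow> real) \<Rightarrow> bool" where
  "universal_kernel k \<longleftrightarrow>
     (\<forall>f. continuous_on UNIV f \<longrightarrow> (\<forall>e>0. \<exists>(n::nat) (xs::nat \<Rightarrow> 'a) (a::nat \<Rightarrow> real).
        \<forall>y. \<bar>f y - (\<Sum>i<n. a i * k (xs i) y)\<bar> < e))"

definition Mplus :: "'a::topological_space measure set" where
  "Mplus = {\<sigma>. sets \<sigma> = sets borel \<and> finite_measure \<sigma>}"

definition kembed :: "('a \<Rightarrow> 'a \<Rightarrow> real) \<Rightarrow> 'a measure \<Rightarrow> 'a \<Rightarrow> real" where
  "kembed k \<sigma> = (\<lambda>y. \<integral>x. k x y \<partial>\<sigma>)"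

definition rkhs_norm_sq :: "('a \<Rightarrow> 'a \<Rightarrow> real) \<Rightarrow> 'a measure \<Rightarrow> real" where
  "rkhs_norm_sq k \<sigma> = (\<integral>y. (\<integral>x. k x y \<partial>\<sigma>) \<partial>\<sigma>)"

definition Bset :: "('a::topological_space \<Rightarrow> 'a \<Rightarrow> real) \<Rightarrow> ('a \<Rightarrow> real) set" where
  "Bset k = {b. \<exists>\<sigma>\<in>Mplus. b = kembed k \<sigma> \<and> sqrt (rkhs_norm_sq k \<sigma>) = 1}"

definition Hinv :: "('a::topological_space \<Rightarrow> 'a \<Rightarrow> real) \<Rightarrow> ('a \<Rightarrow> real) \<Rightarrow> 'a measure" where
  "Hinv k b = (THE \<sigma>. \<sigma> \<in> Mplus \<and> kembed k \<sigma> = b)"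

definition Binv :: "('a::topological_space \<Rightarrow> 'a \<Rightarrow> real) \<Rightarrow> ('a \<Rightarrow> real) \<Rightarrow> 'a measure" where
  "Binv k b = density (Hinv k b) (\<lambda>x. ennreal (b x))"

definition Vstar :: "('a::topological_space \<Rightarrow> 'a \<Rightarrow> real) \<Rightarrow> ('a \<Rightarrow> real) \<Rightarrow> ('a \<Rightarrow> real) \<Rightarrow> 'a \<Rightarrow> real" where
  "Vstar k V b = (\<lambda>y. \<integral>x. k x y * V x \<partial>(Hinv k b))"

definition Wop :: "real \<Rightarrow> ('a::topological_space \<Rightarrow> 'a \<Rightarrow> real) \<Rightarrow> ('a \<Rightarrow> real) \<Rightarrow> ('a \<Rightarrow> real) \<Rightarrow> 'a \<Rightarrow> real" where
  "Wop eps k V b = (\<lambda>y. 2 / eps * (V y * b y - Vstar k V b y))"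

definition msupp :: "'a::metric_space measure \<Rightarrow> 'a set" where
  "msupp \<sigma> = {x. \<forall>e>0. emeasure \<sigma> (ball x e) > 0}"

definition Ptilde :: "('a::metric_space \<Rightarrow> 'a \<Rightarrow> real) \<Rightarrow> ('a \<Rightarrow> real) \<Rightarrow> ('a \<Rightarrow> real) set" where
  "Ptilde k b = {p. continuous_on UNIV p \<and> (\<forall>x. p x \<le> 0) \<and> (\<forall>x\<in>msupp (Hinv k b). p x = 0)}"

definition argmin_set :: "('a \<Rightarrow> real) \<Rightarrow> 'a set" where
  "argmin_set V = {x. \<forall>y. V x \<le> V y}"

end

theory Submission
  imports Defs
begin

(* Let \<sigma> = H_c^{-1}[b] and let V attain its minimum m at y0. Pointwise
  (V b - V^* b)(y) = \<integral> k(x,y) (V(y) - V(x)) d\<sigma>(x). If W b + p = 0 with p \<le> 0, then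
  W b(y0) \<ge> 0, so the integral of the nonnegative function k(x,y0) (V(x) - m) vanishes and,
  as k > 0, V = m holds \<sigma>-a.e. Conversely, if V = m \<sigma>-a.e. then V^* b = m b, so
  W b = (2/\<epsilon>) (V - m) b \<ge> 0 and p = -W b is admissible: it vanishes on supp \<sigma>, which lies
  in the closed set argmin V. Since b > 0, B^{-1}(b) = b \<sigma> has the same null sets as \<sigma>.
  Identifying H_c^{-1}[b] with \<sigma> uses that the kernel embedding is injective: by
  universality it determines the integrals of all continuous functions, and these determine
  a finite Borel measure on a metric space. *)

lemma
  assumes "\<sigma> \<in> Mplus"
  shows sets_Mplus: "sets \<sigma> = sets borel"
    and space_Mplus: "space \<sigma> = UNIV"
    and finite_measure_Mplus: "finite_measure \<sigma>"
proof -
  show sets: "sets \<sigma> = sets borel" and "finite_measure \<sigma>"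
    using assms by (simp_all add: Mplus_def)
  show "space \<sigma> = UNIV"
    using sets_eq_imp_space_eq[OF sets] by simp
qed

lemma borel_measurable_continuous_Mplus:
  assumes "\<sigma> \<in> Mplus" and "continuous_on UNIV g"
  shows "g \<in> borel_measurable \<sigma>"
  using borel_measurable_continuous_onI[OF assms(2)]
    measurable_cong_sets[OF sets_Mplus[OF assms(1)] refl] by blast

lemma integrable_continuous_Mplus:
  fixes g :: "'a::topological_space \<Rightarrow> 'b::{banach, second_countable_topology}"
  assumes "compact (UNIV :: 'a set)" and "\<sigma> \<in> Mplus" and "continuous_on UNIV g"
  shows "integrable \<sigma> g"
proof -
  interpret finite_measure \<sigma> using finite_measure_Mplus[OF assms(2)] .
  obtain B where B: "\<And>x. norm (g x) \<le> B"
    using continuous_on_compact_bound[OF assms(1,3)] by (metis UNIV_I)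
  show ?thesis
    by (intro integrable_const_bound[where B=B] AE_I2 B borel_measurable_continuous_Mplus assms(2,3))
qed

lemma abs_integral_le_Mplus:
  fixes g :: "'a::topological_space \<Rightarrow> real"
  assumes "compact (UNIV :: 'a set)" and "\<sigma> \<in> Mplus" and "continuous_on UNIV g"
    and "\<And>x. \<bar>g x\<bar> \<le> e"
  shows "\<bar>\<integral>x. g x \<partial>\<sigma>\<bar> \<le> e * measure \<sigma> UNIV"
proof -
  interpret finite_measure \<sigma> using finite_measure_Mplus[OF assms(2)] .
  have "\<bar>\<integral>x. g x \<partial>\<sigma>\<bar> \<le> (\<integral>x. \<bar>g x\<bar> \<partial>\<sigma>)"
    by (rule integral_abs_bound)
  also have "\<dots> \<le> (\<integral>x. e \<partial>\<sigma>)"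
    using assms by (intro integral_mono integrable_continuous_Mplus continuous_intros) auto
  finally show ?thesis
    using space_Mplus[OF assms(2)] by (simp add: mult.commute)
qed

lemma continuous_on_integral_bounded_kernel:
  fixes K :: "'a::topological_space \<Rightarrow> 'b::metric_space \<Rightarrow> real"
  assumes \<sigma>: "\<sigma> \<in> Mplus"
    and cont_fst: "\<And>y. continuous_on UNIV (\<lambda>x. K x y)"
    and cont_snd: "\<And>x. continuous_on UNIV (K x)"
    and bound: "\<And>x y. \<bar>K x y\<bar> \<le> B"
  shows "continuous_on UNIV (\<lambda>y. \<integral>x. K x y \<partial>\<sigma>)"
  unfolding continuous_on_sequentially
proof (intro allI ballI impI, elim conjE)
  interpret finite_measure \<sigma> using finite_measure_Mplus[OF \<sigma>] .
  fix ys :: "nat \<Rightarrow> 'b" and y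
  assume "ys \<longlonglongrightarrow> y"
  have "(\<lambda>n. \<integral>x. K x (ys n) \<partial>\<sigma>) \<longlonglongrightarrow> (\<integral>x. K x y \<partial>\<sigma>)"
  proof (rule integral_dominated_convergence[where w="\<lambda>_. B"])
    show "(\<lambda>x. K x y) \<in> borel_measurable \<sigma>" "(\<lambda>x. K x (ys n)) \<in> borel_measurable \<sigma>" for n
      by (intro borel_measurable_continuous_Mplus \<sigma> cont_fst)+
    show "AE x in \<sigma>. (\<lambda>n. K x (ys n)) \<longlonglongrightarrow> K x y"
      using \<open>ys \<longlonglongrightarrow> y\<close> cont_snd
      by (intro AE_I2 isCont_tendsto_compose[where g="K _"])
        (simp add: continuous_on_eq_continuous_at)
  qed (use bound in auto)
  then show "((\<lambda>y. \<integral>x. K x y \<partial>\<sigma>) \<circ> ys) \<longlonglongrightarrow> (\<integral>x. K x y \<partial>\<sigma>)"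
    by (simp add: o_def)
qed

lemma integral_kernel_combination:
  fixes K :: "'a::topological_space \<Rightarrow> 'a \<Rightarrow> real"
  assumes "compact (UNIV :: 'a set)" and "\<sigma> \<in> Mplus"
    and "\<And>x. continuous_on UNIV (K x)" and "\<And>x y. K x y = K y x"
  shows "(\<integral>y. (\<Sum>i<n. a i * K (xs i) y) \<partial>\<sigma>) = (\<Sum>i<n. a i * kembed K \<sigma> (xs i))"
proof -
  have kembed_eq: "kembed K \<sigma> z = (\<integral>y. K z y \<partial>\<sigma>)" for z
    unfolding kembed_def by (subst assms(4)) (rule refl)
  have "(\<integral>y. (\<Sum>i<n. a i * K (xs i) y) \<partial>\<sigma>) = (\<Sum>i<n. \<integral>y. a i * K (xs i) y \<partial>\<sigma>)"
    using assms by (intro Bochner_Integration.integral_sum integrable_mult_right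
        integrable_continuous_Mplus)
  then show ?thesis
    by (simp add: kembed_eq)
qed

lemma abs_integral_diff_le_if_kembed_eq:
  fixes K :: "'a::topological_space \<Rightarrow> 'a \<Rightarrow> real"
  assumes cpt: "compact (UNIV :: 'a set)" and \<sigma>1: "\<sigma>1 \<in> Mplus" and \<sigma>2: "\<sigma>2 \<in> Mplus"
    and K: "\<And>x. continuous_on UNIV (K x)" and sym: "\<And>x y. K x y = K y x"
    and universal: "universal_kernel K" and eq: "kembed K \<sigma>1 = kembed K \<sigma>2"
    and f: "continuous_on UNIV (f :: 'a \<Rightarrow> real)" and "0 < e"
  shows "\<bar>(\<integral>x. f x \<partial>\<sigma>1) - (\<integral>x. f x \<partial>\<sigma>2)\<bar> \<le> e * (measure \<sigma>1 UNIV + measure \<sigma>2 UNIV)"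
proof -
  obtain n :: nat and xs a where approx: "\<And>y. \<bar>f y - (\<Sum>i<n. a i * K (xs i) y)\<bar> < e"
    using universal f \<open>0 < e\<close> unfolding universal_kernel_def by blast
  define S where "S y = (\<Sum>i<n. a i * K (xs i) y)" for y
  have S: "continuous_on UNIV S"
    unfolding S_def by (intro continuous_intros K)
  have close: "\<bar>(\<integral>x. f x \<partial>\<sigma>) - (\<integral>x. S x \<partial>\<sigma>)\<bar> \<le> e * measure \<sigma> UNIV" if "\<sigma> \<in> Mplus" for \<sigma>
  proof -
    have "(\<integral>x. f x \<partial>\<sigma>) - (\<integral>x. S x \<partial>\<sigma>) = (\<integral>x. f x - S x \<partial>\<sigma>)"
      using cpt that f S by (simp add: integrable_continuous_Mplus)
    also have "\<bar>\<dots>\<bar> \<le> e * measure \<sigma> UNIV"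
      using approx less_imp_le unfolding S_def
      by (intro abs_integral_le_Mplus[OF cpt that] continuous_intros f K) blast
    finally show ?thesis .
  qed
  have "(\<integral>x. S x \<partial>\<sigma>1) = (\<integral>x. S x \<partial>\<sigma>2)"
    unfolding S_def integral_kernel_combination[OF cpt \<sigma>1 K sym]
      integral_kernel_combination[OF cpt \<sigma>2 K sym] eq ..
  then show ?thesis
    using close[OF \<sigma>1] close[OF \<sigma>2] by (simp add: algebra_simps)
qed

lemma integral_continuous_eq_if_kembed_eq:
  fixes K :: "'a::topological_space \<Rightarrow> 'a \<Rightarrow> real"
  assumes "compact (UNIV :: 'a set)" and "\<sigma>1 \<in> Mplus" and "\<sigma>2 \<in> Mplus"
    and "\<And>x. continuous_on UNIV (K x)" and "\<And>x y. K x y = K y x"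
    and "universal_kernel K" and "kembed K \<sigma>1 = kembed K \<sigma>2"
    and "continuous_on UNIV (f :: 'a \<Rightarrow> real)"
  shows "(\<integral>x. f x \<partial>\<sigma>1) = (\<integral>x. f x \<partial>\<sigma>2)"
proof -
  define M where "M = measure \<sigma>1 UNIV + measure \<sigma>2 UNIV"
  have "M \<ge> 0"
    by (simp add: M_def)
  have "\<bar>(\<integral>x. f x \<partial>\<sigma>1) - (\<integral>x. f x \<partial>\<sigma>2)\<bar> \<le> 0"
  proof (rule field_le_epsilon)
    fix d :: real
    assume "0 < d"
    with \<open>M \<ge> 0\<close> have "0 < d / (M + 1)"
      by simp
    then have "\<bar>(\<integral>x. f x \<partial>\<sigma>1) - (\<integral>x. f x \<partial>\<sigma>2)\<bar> \<le> d / (M + 1) * M"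
      unfolding M_def by (rule abs_integral_diff_le_if_kembed_eq[where K=K, OF assms])
    also have "\<dots> \<le> 0 + d"
      using \<open>M \<ge> 0\<close> \<open>0 < d\<close> by (simp add: field_simps)
    finally show "\<bar>(\<integral>x. f x \<partial>\<sigma>1) - (\<integral>x. f x \<partial>\<sigma>2)\<bar> \<le> 0 + d" .
  qed
  then show ?thesis
    by simp
qed

lemma LIMSEQ_max_infdist_indicator:
  fixes F :: "'a::metric_space set"
  assumes F: "closed F" "F \<noteq> {}" \<comment> \<open>\<open>infdist x {} = 0\<close>, so the limit would be 1, not 0\<close>
  shows "(\<lambda>n. max 0 (1 - real n * infdist x F)) \<longlonglongrightarrow> indicator F x"
proof (cases "x \<in> F")
  case True
  then show ?thesis
    using F in_closed_iff_infdist_zero by simp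
next
  case False
  then have "infdist x F > 0"
    using F infdist_pos_not_in_closed by blast
  then obtain N :: nat where N: "1 < real N * infdist x F"
    by (metis reals_Archimedean3)
  have "max 0 (1 - real n * infdist x F) = 0" if "N \<le> n" for n
  proof -
    have "real N * infdist x F \<le> real n * infdist x F"
      using that \<open>infdist x F > 0\<close> by (intro mult_right_mono) auto
    then show ?thesis
      using N by simp
  qed
  then show ?thesis
    using False by (intro tendsto_eventually eventually_sequentiallyI) simp
qed

lemma measure_closed_eq_if_integral_continuous_eq:
  fixes F :: "'a::metric_space set"
  assumes \<sigma>1: "\<sigma>1 \<in> Mplus" and \<sigma>2: "\<sigma>2 \<in> Mplus"
    and F: "closed F" "F \<noteq> {}"
    and eq: "\<And>f. continuous_on UNIV (f :: 'a \<Rightarrow> real) \<Longrightarrow> (\<integral>x. f x \<partial>\<sigma>1) = (\<integral>x. f x \<partial>\<sigma>2)"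
  shows "measure \<sigma>1 F = measure \<sigma>2 F"
proof -
  define g where "g n x = max 0 (1 - real n * infdist x F)" for n x
  have g_cont: "continuous_on UNIV (g n)" for n
    unfolding g_def by (intro continuous_intros)
  have g_lim: "(\<lambda>n. g n x) \<longlonglongrightarrow> indicator F x" for x
    unfolding g_def using F by (rule LIMSEQ_max_infdist_indicator)
  have lim: "(\<lambda>n. \<integral>x. g n x \<partial>\<sigma>) \<longlonglongrightarrow> measure \<sigma> F" if \<sigma>: "\<sigma> \<in> Mplus" for \<sigma>
  proof -
    interpret finite_measure \<sigma> using finite_measure_Mplus[OF \<sigma>] .
    have "(\<lambda>n. \<integral>x. g n x \<partial>\<sigma>) \<longlonglongrightarrow> (\<integral>x. indicator F x \<partial>\<sigma>)"
    proof (rule integral_dominated_convergence[where w="\<lambda>_. 1"])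
      show "(\<lambda>x. indicator F x :: real) \<in> borel_measurable \<sigma>"
        using F(1) by (intro borel_measurable_indicator) (simp add: sets_Mplus[OF \<sigma>])
      show "g n \<in> borel_measurable \<sigma>" for n
        by (rule borel_measurable_continuous_Mplus[OF \<sigma> g_cont])
      show "AE x in \<sigma>. norm (g n x) \<le> 1" for n
        by (intro AE_I2) (simp add: g_def infdist_nonneg)
    qed (simp_all add: g_lim)
    then show ?thesis
      using F sets_Mplus[OF \<sigma>] space_Mplus[OF \<sigma>] by simp
  qed
  from lim[OF \<sigma>1] lim[OF \<sigma>2] show ?thesis
    unfolding eq[OF g_cont] by (rule LIMSEQ_unique)
qed

lemma Mplus_eqI_integral_continuous:
  fixes \<sigma>1 \<sigma>2 :: "'a::metric_space measure"
  assumes \<sigma>1: "\<sigma>1 \<in> Mplus" and \<sigma>2: "\<sigma>2 \<in> Mplus"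
    and eq: "\<And>f. continuous_on UNIV (f :: 'a \<Rightarrow> real) \<Longrightarrow> (\<integral>x. f x \<partial>\<sigma>1) = (\<integral>x. f x \<partial>\<sigma>2)"
  shows "\<sigma>1 = \<sigma>2"
proof (rule measure_eqI_generator_eq[where \<Omega>=UNIV and E="Collect closed" and A="\<lambda>_. UNIV"])
  interpret \<sigma>1: finite_measure \<sigma>1 using finite_measure_Mplus[OF \<sigma>1] .
  interpret \<sigma>2: finite_measure \<sigma>2 using finite_measure_Mplus[OF \<sigma>2] .
  have "sets (borel :: 'a measure) = sigma_sets UNIV (Collect closed)"
    by (simp add: borel_eq_closed)
  then show "sets \<sigma>1 = sigma_sets UNIV (Collect closed)" "sets \<sigma>2 = sigma_sets UNIV (Collect closed)"
    using sets_Mplus[OF \<sigma>1] sets_Mplus[OF \<sigma>2] by simp_all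
  show "Int_stable (Collect closed :: 'a set set)"
    by (auto simp: Int_stable_def)
  show "emeasure \<sigma>1 UNIV \<noteq> \<infinity>"
    by simp
  fix X :: "'a set"
  assume "X \<in> Collect closed"
  then show "emeasure \<sigma>1 X = emeasure \<sigma>2 X"
    using measure_closed_eq_if_integral_continuous_eq[OF \<sigma>1 \<sigma>2 _ _ eq, of X]
    by (cases "X = {}") (simp_all add: \<sigma>1.emeasure_eq_measure \<sigma>2.emeasure_eq_measure)
qed auto

lemma Hinv_kembed:
  fixes K :: "'a::metric_space \<Rightarrow> 'a \<Rightarrow> real"
  assumes "compact (UNIV :: 'a set)" and "\<sigma> \<in> Mplus"
    and "\<And>x. continuous_on UNIV (K x)" and "\<And>x y. K x y = K y x" and "universal_kernel K"
  shows "Hinv K (kembed K \<sigma>) = \<sigma>"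
  unfolding Hinv_def
proof (rule the_equality)
  fix \<tau>
  assume "\<tau> \<in> Mplus \<and> kembed K \<tau> = kembed K \<sigma>"
  then show "\<tau> = \<sigma>"
    using assms by (intro Mplus_eqI_integral_continuous integral_continuous_eq_if_kembed_eq[where K=K]) auto
qed (use assms(2) in simp)

lemma kembed_pos:
  assumes "\<sigma> \<in> Mplus" and "emeasure \<sigma> UNIV \<noteq> 0"
    and "\<And>x. 0 < K x y" and "integrable \<sigma> (\<lambda>x. K x y)"
  shows "0 < kembed K \<sigma> y"
proof -
  interpret finite_measure \<sigma> using finite_measure_Mplus[OF assms(1)] .
  have "(\<integral>x. 0 \<partial>\<sigma>) < (\<integral>x. K x y \<partial>\<sigma>)"
    using assms space_Mplus[OF assms(1)] by (intro integral_less_AE_space) auto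
  then show ?thesis
    by (simp add: kembed_def)
qed

lemma Bset_E:
  fixes K :: "'a::metric_space \<Rightarrow> 'a \<Rightarrow> real"
  assumes cpt: "compact (UNIV :: 'a set)" and b: "b \<in> Bset K"
    and K_pos: "\<And>x y. 0 < K x y" and K_bound: "\<And>x y. K x y \<le> B"
    and K_cont: "\<And>x. continuous_on UNIV (K x)" and K_sym: "\<And>x y. K x y = K y x"
    and universal: "universal_kernel K"
  obtains \<sigma> where "\<sigma> \<in> Mplus" and "b = kembed K \<sigma>" and "Hinv K b = \<sigma>"
    and "continuous_on UNIV b" and "\<And>y. 0 < b y"
proof -
  obtain \<sigma> where \<sigma>: "\<sigma> \<in> Mplus" and b_eq: "b = kembed K \<sigma>"
    and norm: "sqrt (rkhs_norm_sq K \<sigma>) = 1"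
    using b unfolding Bset_def by blast
  have K_cont': "continuous_on UNIV (\<lambda>x. K x y)" for y
    using K_cont[of y] by (subst K_sym)
  have "emeasure \<sigma> UNIV \<noteq> 0"
  proof
    assume "emeasure \<sigma> UNIV = 0"
    then have "rkhs_norm_sq K \<sigma> = 0"
      unfolding rkhs_norm_sq_def using space_Mplus[OF \<sigma>]
      by (intro integral_eq_zero_AE emeasure_0_AE) simp
    with norm show False
      by simp
  qed
  then have "0 < b y" for y
    unfolding b_eq
    by (intro kembed_pos \<sigma> K_pos integrable_continuous_Mplus[OF cpt \<sigma> K_cont'])
  moreover have "continuous_on UNIV b"
    unfolding b_eq kembed_def
    using K_pos K_bound less_imp_le[OF K_pos]
    by (intro continuous_on_integral_bounded_kernel[where B=B] \<sigma> K_cont K_cont') (simp add: abs_le_iff)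
  moreover have "Hinv K b = \<sigma>"
    unfolding b_eq using cpt \<sigma> K_cont K_sym universal by (rule Hinv_kembed)
  ultimately show ?thesis
    using that \<sigma> b_eq by blast
qed

lemma emeasure_density_eq_0_iff_AE:
  assumes "f \<in> borel_measurable M" and "A \<in> sets M" and "\<And>x. x \<in> space M \<Longrightarrow> 0 < f x"
  shows "emeasure (density M f) A = 0 \<longleftrightarrow> (AE x in M. x \<notin> A)"
proof -
  have "emeasure (density M f) A = 0 \<longleftrightarrow> A \<in> null_sets (density M f)"
    using assms(2) by (simp add: null_sets_def)
  also have "\<dots> \<longleftrightarrow> (AE x in M. x \<in> A \<longrightarrow> f x = 0)"
    using assms(1,2) by (simp add: null_sets_density_iff)
  also have "\<dots> \<longleftrightarrow> (AE x in M. x \<notin> A)"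
    using assms(3) by (intro AE_cong) fastforce
  finally show ?thesis .
qed

lemma msupp_Int_null_open:
  assumes "open U" and "U \<in> sets \<sigma>" and "emeasure \<sigma> U = 0"
  shows "msupp \<sigma> \<inter> U = {}"
proof -
  have "x \<notin> msupp \<sigma>" if "x \<in> U" for x
  proof -
    obtain e where "0 < e" and "ball x e \<subseteq> U"
      using assms(1) \<open>x \<in> U\<close> open_contains_ball by blast
    then have "emeasure \<sigma> (ball x e) = 0"
      using emeasure_mono[of "ball x e" U \<sigma>] assms(2,3) by simp
    then show ?thesis
      using \<open>0 < e\<close> unfolding msupp_def by auto
  qed
  then show ?thesis
    by blast
qed

lemma Wop_eq_integral:
  assumes "Hinv K b = \<sigma>" and "b = kembed K \<sigma>"
    and "integrable \<sigma> (\<lambda>x. K x y)" and "integrable \<sigma> (\<lambda>x. K x y * V x)"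
  shows "Wop eps K V b y = 2 / eps * (\<integral>x. K x y * (V y - V x) \<partial>\<sigma>)"
proof -
  have "V y * b y - Vstar K V b y = (\<integral>x. V y * K x y \<partial>\<sigma>) - (\<integral>x. K x y * V x \<partial>\<sigma>)"
    using assms(1,2) by (simp add: Vstar_def kembed_def)
  also have "\<dots> = (\<integral>x. K x y * (V y - V x) \<partial>\<sigma>)"
    using assms(3,4) by (simp add: right_diff_distrib mult.commute)
  finally show ?thesis
    by (simp add: Wop_def)
qed

lemma AE_eq_min_if_Wop_nonneg:
  assumes eps: "0 < eps" and Hinv: "Hinv K b = \<sigma>" and b: "b = kembed K \<sigma>"
    and K_pos: "\<And>x. 0 < K x y0" and min: "\<And>x. V y0 \<le> V x"
    and int_K: "integrable \<sigma> (\<lambda>x. K x y0)" and int_KV: "integrable \<sigma> (\<lambda>x. K x y0 * V x)"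
    and W: "0 \<le> Wop eps K V b y0"
  shows "AE x in \<sigma>. V x = V y0"
proof -
  define h where "h x = K x y0 * (V x - V y0)" for x
  have h_int: "integrable \<sigma> h"
    unfolding h_def right_diff_distrib using int_K int_KV by simp
  have h_nonneg: "AE x in \<sigma>. 0 \<le> h x"
    using K_pos min by (intro AE_I2) (simp add: h_def less_imp_le)
  have "0 \<le> (\<integral>x. K x y0 * (V y0 - V x) \<partial>\<sigma>)"
    using W eps Wop_eq_integral[OF Hinv b int_K int_KV] by (simp add: zero_le_divide_iff)
  also have "(\<integral>x. K x y0 * (V y0 - V x) \<partial>\<sigma>) = (\<integral>x. - h x \<partial>\<sigma>)"
    by (simp add: h_def algebra_simps)
  finally have "integral\<^sup>L \<sigma> h = 0"
    using integral_nonneg_AE[OF h_nonneg] by simp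
  then have "AE x in \<sigma>. h x = 0"
    using integral_nonneg_eq_0_iff_AE[OF h_int h_nonneg] by simp
  moreover have "h x = 0 \<longleftrightarrow> V x = V y0" for x
    using K_pos[of x] by (simp add: h_def)
  ultimately show ?thesis
    by simp
qed

lemma neg_Wop_mem_Ptilde:
  assumes eps: "0 < eps" and \<sigma>: "\<sigma> \<in> Mplus" and Hinv: "Hinv K b = \<sigma>" and b: "b = kembed K \<sigma>"
    and b_cont: "continuous_on UNIV b" and b_nonneg: "\<And>y. 0 \<le> b y"
    and K_cont: "\<And>y. continuous_on UNIV (\<lambda>x. K x y)"
    and V_cont: "continuous_on UNIV V" and min: "\<And>x. V y0 \<le> V x"
    and AE: "AE x in \<sigma>. V x = V y0"
  shows "(\<lambda>y. - Wop eps K V b y) \<in> Ptilde K b"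
proof -
  have W: "Wop eps K V b y = 2 / eps * ((V y - V y0) * b y)" for y
  proof -
    have "Vstar K V b y = (\<integral>x. K x y * V y0 \<partial>\<sigma>)"
      unfolding Vstar_def Hinv using AE
      by (intro integral_cong_AE borel_measurable_continuous_Mplus[OF \<sigma>] continuous_intros
          K_cont V_cont) (auto elim: eventually_mono)
    also have "\<dots> = V y0 * b y"
      unfolding b kembed_def by simp
    finally show ?thesis
      unfolding Wop_def by (simp add: algebra_simps)
  qed
  have U_open: "open {x. V y0 < V x}"
    by (rule open_Collect_less[OF continuous_on_const V_cont])
  then have U_sets: "{x. V y0 < V x} \<in> sets \<sigma>"
    by (simp add: sets_Mplus[OF \<sigma>])
  have "{x \<in> space \<sigma>. V x \<noteq> V y0} = {x. V y0 < V x}"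
    using min space_Mplus[OF \<sigma>] by (force simp: less_le)
  then have "emeasure \<sigma> {x. V y0 < V x} = 0"
    using AE AE_iff_measurable[OF U_sets] by simp
  then have supp: "V x = V y0" if "x \<in> msupp \<sigma>" for x
    using msupp_Int_null_open[OF U_open U_sets] that min[of x] by fastforce
  show ?thesis
    unfolding Ptilde_def Hinv
  proof (intro CollectI conjI allI ballI)
    show "continuous_on UNIV (\<lambda>y. - Wop eps K V b y)"
      unfolding W by (intro continuous_intros V_cont b_cont)
    show "- Wop eps K V b y \<le> 0" for y
      unfolding W using eps min[of y] b_nonneg[of y] by simp
    show "- Wop eps K V b x = 0" if "x \<in> msupp \<sigma>" for x
      unfolding W using supp[OF that] by simp
  qed
qed

lemma Binv_null_off_argmin_iff_AE_eq_min:
  assumes \<sigma>: "\<sigma> \<in> Mplus" and Hinv: "Hinv K b = \<sigma>"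
    and b_cont: "continuous_on UNIV b" and b_pos: "\<And>y. 0 < b y"
    and V_cont: "continuous_on UNIV V" and min: "\<And>x. V y0 \<le> V x"
  shows "emeasure (Binv K b) (UNIV - argmin_set V) = 0 \<longleftrightarrow> (AE x in \<sigma>. V x = V y0)"
proof -
  have "x \<in> argmin_set V \<longleftrightarrow> V x \<le> V y0" for x
    using min by (simp add: argmin_set_def) (meson order_trans)
  then have argmin: "UNIV - argmin_set V = {x. V y0 < V x}"
    by (simp add: set_eq_iff not_le)
  have "{x. V y0 < V x} \<in> sets \<sigma>"
    using open_Collect_less[OF continuous_on_const V_cont] by (simp add: sets_Mplus[OF \<sigma>])
  then have "emeasure (Binv K b) (UNIV - argmin_set V) = 0 \<longleftrightarrow> (AE x in \<sigma>. x \<notin> {x. V y0 < V x})"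
    unfolding Binv_def Hinv argmin using b_pos space_Mplus[OF \<sigma>]
    by (intro emeasure_density_eq_0_iff_AE
        measurable_compose[OF borel_measurable_continuous_Mplus[OF \<sigma> b_cont] measurable_ennreal])
      simp_all
  also have "\<dots> \<longleftrightarrow> (AE x in \<sigma>. V x = V y0)"
    using min by (intro AE_cong) (simp add: not_less eq_iff)
  finally show ?thesis .
qed

lemma zero_in_Wop_plus_Ptilde_iff_AE_eq_min:
  fixes K :: "'a::metric_space \<Rightarrow> 'a \<Rightarrow> real"
  assumes eps: "0 < eps" and cpt: "compact (UNIV :: 'a set)" and \<sigma>: "\<sigma> \<in> Mplus"
    and Hinv: "Hinv K b = \<sigma>" and b: "b = kembed K \<sigma>"
    and b_cont: "continuous_on UNIV b" and b_nonneg: "\<And>y. 0 \<le> b y"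
    and K_pos: "\<And>x y. 0 < K x y" and K_cont: "\<And>y. continuous_on UNIV (\<lambda>x. K x y)"
    and V_cont: "continuous_on UNIV V" and min: "\<And>x. V y0 \<le> V x"
  shows "(\<exists>p\<in>Ptilde K b. \<forall>y. Wop eps K V b y + p y = 0) \<longleftrightarrow> (AE x in \<sigma>. V x = V y0)"
proof
  assume "\<exists>p\<in>Ptilde K b. \<forall>y. Wop eps K V b y + p y = 0"
  then obtain p where "p \<in> Ptilde K b" and "Wop eps K V b y0 + p y0 = 0"
    by blast
  moreover from this(1) have "p y0 \<le> 0"
    by (simp add: Ptilde_def)
  ultimately have "0 \<le> Wop eps K V b y0"
    by linarith
  moreover have "integrable \<sigma> (\<lambda>x. K x y0)" and "integrable \<sigma> (\<lambda>x. K x y0 * V x)"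
    by (intro integrable_continuous_Mplus[OF cpt \<sigma>] continuous_intros K_cont V_cont)+
  ultimately show "AE x in \<sigma>. V x = V y0"
    by (intro AE_eq_min_if_Wop_nonneg[of eps K b \<sigma> y0 V, OF eps Hinv b K_pos min])
next
  assume "AE x in \<sigma>. V x = V y0"
  then have p: "(\<lambda>y. - Wop eps K V b y) \<in> Ptilde K b"
    by (rule neg_Wop_mem_Ptilde[OF eps \<sigma> Hinv b b_cont b_nonneg K_cont V_cont min])
  show "\<exists>p\<in>Ptilde K b. \<forall>y. Wop eps K V b y + p y = 0"
    by (intro bexI[OF _ p]) simp
qed

lemma kc_pos: "0 < kc eps c x y"
  by (simp add: kc_def)

lemma kc_le_1:
  assumes "0 < eps" and "0 \<le> c x y"
  shows "kc eps c x y \<le> 1"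
  using assms by (simp add: kc_def)

lemma kc_sym:
  assumes "\<And>x y. c x y = c y x"
  shows "kc eps c x y = kc eps c y x"
  using assms by (simp add: kc_def)

lemma continuous_on_kc:
  assumes "continuous_on UNIV (\<lambda>(x, y). c x y)"
  shows "continuous_on UNIV (kc eps c x)"
proof -
  have "continuous_on UNIV (\<lambda>y. (\<lambda>(x, y). c x y) (x, y))"
    by (rule continuous_on_compose2[OF assms]) (intro continuous_intros, simp)
  then show ?thesis
    unfolding kc_def divide_inverse by (intro continuous_intros) simp
qed

theorem mainTheorem16:
  fixes eps :: real and c :: "'a::metric_space \<Rightarrow> 'a \<Rightarrow> real" and V :: "'a \<Rightarrow> real"
    and b :: "'a \<Rightarrow> real"
  assumes "compact (UNIV :: 'a set)"
    and "eps > 0"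
    and "continuous_on UNIV (\<lambda>(x, y). c x y)"
    and "\<forall>x y. c x y = c y x"
    and "\<forall>x y. c x y \<ge> 0"
    and "pd_kernel (kc eps c)"
    and "universal_kernel (kc eps c)"
    and "continuous_on UNIV V"
    and "b \<in> Bset (kc eps c)"
  shows "(\<exists>p\<in>Ptilde (kc eps c) b. \<forall>y. Wop eps (kc eps c) V b y + p y = 0)
     \<longleftrightarrow> emeasure (Binv (kc eps c) b) (UNIV - argmin_set V) = 0"
proof -
  define k where "k = kc eps c"
  have k_pos: "0 < k x y" and k_le_1: "k x y \<le> 1" and k_sym: "k x y = k y x"
    and k_cont: "continuous_on UNIV (k x)" for x y
    using assms(2-5) unfolding k_def by (auto intro: kc_pos kc_le_1 kc_sym continuous_on_kc)
  have k_cont': "continuous_on UNIV (\<lambda>x. k x y)" for y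
    using k_cont[of y] by (subst k_sym)
  obtain \<sigma> where \<sigma>: "\<sigma> \<in> Mplus" and b: "b = kembed k \<sigma>" and Hinv: "Hinv k b = \<sigma>"
    and b_cont: "continuous_on UNIV b" and b_pos: "\<And>y. 0 < b y"
    using Bset_E[OF assms(1) assms(9)[folded k_def] k_pos k_le_1 k_cont k_sym
        assms(7)[folded k_def]] by blast
  obtain y0 where min: "\<And>x. V y0 \<le> V x"
    using continuous_attains_inf[OF assms(1) UNIV_not_empty assms(8)] by blast
  show ?thesis
    unfolding k_def[symmetric]
    using zero_in_Wop_plus_Ptilde_iff_AE_eq_min[OF assms(2,1) \<sigma> Hinv b b_cont less_imp_le[OF b_pos] k_pos k_cont'
        assms(8) min]
      Binv_null_off_argmin_iff_AE_eq_min[OF \<sigma> Hinv b_cont b_pos assms(8) min]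
    by simp
qed

end
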